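(* Consider the system of ordinary differential equations for $(x(t),h(t),n(t))$: \[ \frac{dx}{dt} = x(1-x)S(h) + \mu(h)(1-x) - \nu x,\qquad \frac{dh}{dt} = \alpha n(1+\beta x)\,G(h) - \Gamma(n)(h-1),\qquad \frac{dn}{dt} = r n(1-n) - D(h,x)\,n, \] where \[ S(h) = \frac{s_0}{1+e^{-\lambda(h-h_c)}} - c + \varphi\, d_S(h),\quad d_S(h) = \frac{d_{\max} h^m}{h_{50}^m + h^m},\quad \mu(h)=\mu_0 h^p, \] \[ G(h) = \frac{K_g}{K_g+h},\quad \Gamma(n) = \frac{\gamma_0}{1+\eta n},\quad D(h,x) = (1-\varphi x)\,d_S(h), \] and all parameters $s_0,\lambda,h_c,c,\varphi,d_{\max},h_{50},m,\mu_0,p,\nu,\alpha,\beta,K_g,\gamma_0,\eta,r$ are positive, with $\varphi\le 1$. Let $\mathcal{D} = [0,1]\times(0,\infty)\times[0,1]$. Then for every initial condition $(x_0,h_0,n_0)\in\mathcal{D}$ the system admits a unique solution $(x(t),h(t),n(t))$ defined for all $t\ge 0$, and this solution remains in $\mathcal{D}$ for all $t\ge 0$.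
   Context: The model describes a tumor: $x$ is the fraction of acid-resistant cells, $h$ is the proton concentration normalized by its physiological value (so $h=1$ is physiological pH), and $n$ is tumor density normalized by carrying capacity. *)

theory Defs
  imports "HOL-Analysis.Analysis"
begin

record params =
  s0 :: real  lam :: real  hc :: real  cc :: real  phi :: real
  dmax :: real  h50 :: real  mm :: real  mu0 :: real  pp :: real
  nu :: real  alpha :: real  beta :: real  Kg :: real  gamma0 :: real
  eta :: real  rr :: real

definition params_ok :: "params \<Rightarrow> bool" where
  "params_ok P \<longleftrightarrow> s0 P > 0 \<and> lam P > 0 \<and> hc P > 0 \<and> cc P > 0 \<and> phi P > 0 \<and>
     dmax P > 0 \<and> h50 P > 0 \<and> mm P > 0 \<and> mu0 P > 0 \<and> pp P > 0 \<and> nu P > 0 \<and>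
     alpha P > 0 \<and> beta P > 0 \<and> Kg P > 0 \<and> gamma0 P > 0 \<and> eta P > 0 \<and> rr P > 0 \<and>
     phi P \<le> 1"

definition dS :: "params \<Rightarrow> real \<Rightarrow> real" where
  "dS P h = dmax P * h powr mm P / (h50 P powr mm P + h powr mm P)"

definition Sf :: "params \<Rightarrow> real \<Rightarrow> real" where
  "Sf P h = s0 P / (1 + exp (- lam P * (h - hc P))) - cc P + phi P * dS P h"

definition muf :: "params \<Rightarrow> real \<Rightarrow> real" where
  "muf P h = mu0 P * h powr pp P"

definition Gf :: "params \<Rightarrow> real \<Rightarrow> real" where
  "Gf P h = Kg P / (Kg P + h)"

definition Gammaf :: "params \<Rightarrow> real \<Rightarrow> real" where
  "Gammaf P n = gamma0 P / (1 + eta P * n)"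

definition Df :: "params \<Rightarrow> real \<Rightarrow> real \<Rightarrow> real" where
  "Df P h x = (1 - phi P * x) * dS P h"

definition fx :: "params \<Rightarrow> real \<Rightarrow> real \<Rightarrow> real \<Rightarrow> real" where
  "fx P x h n = x * (1 - x) * Sf P h + muf P h * (1 - x) - nu P * x"

definition fh :: "params \<Rightarrow> real \<Rightarrow> real \<Rightarrow> real \<Rightarrow> real" where
  "fh P x h n = alpha P * n * (1 + beta P * x) * Gf P h - Gammaf P n * (h - 1)"

definition fn :: "params \<Rightarrow> real \<Rightarrow> real \<Rightarrow> real \<Rightarrow> real" where
  "fn P x h n = rr P * n * (1 - n) - Df P h x * n"

definition is_solution :: "params \<Rightarrow> (real \<Rightarrow> real) \<Rightarrow> (real \<Rightarrow> real) \<Rightarrow> (real \<Rightarrow> real) \<Rightarrow> bool" where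
  "is_solution P x h n \<longleftrightarrow> (\<forall>t\<ge>0.
      (x has_real_derivative fx P (x t) (h t) (n t)) (at t within {0..}) \<and>
      (h has_real_derivative fh P (x t) (h t) (n t)) (at t within {0..}) \<and>
      (n has_real_derivative fn P (x t) (h t) (n t)) (at t within {0..}))"

end

theory Submission
  imports Defs
begin

text \<open>The right-hand side is smooth wherever \<open>h > 0\<close> and \<open>1 + eta * n > 0\<close>, hence Lipschitz on
  compact boxes there. Every face of the box \<open>[0,1] \<times> [min h0 1, max h0 h_upper] \<times> [0,1]\<close> is
  crossed inwards: at \<open>x = 0\<close> only the influx \<open>mu h\<close> remains, at \<open>x = 1\<close> only the loss \<open>- nu\<close>;
  \<open>n = 0\<close> is an equilibrium and at \<open>n = 1\<close> only the death term \<open>- D n \<le> 0\<close> remains; below the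
  physiological value \<open>h = 1\<close> both terms of \<open>dh/dt\<close> are nonnegative, and above \<open>h_upper\<close>
  clearance beats production.
  Clamping the state to this box gives a bounded, globally Lipschitz field whose solution exists
  on the whole half-line (a contraction in an exponentially weighted supremum norm); by the
  inward-pointing property it never leaves the box, so it solves the original system.
  Uniqueness follows from the local Lipschitz property along this solution by looking at the
  first time two solutions separate.\<close>

section \<open>Global solutions of Lipschitz autonomous equations\<close>

lemma weighted_integral_bound:
  fixes g :: "real \<Rightarrow> 'a::banach"
  assumes k: "k > 0" and u: "u \<ge> 0" and g: "g integrable_on {0..u}"
    and bound: "\<And>s. s \<in> {0..u} \<Longrightarrow> norm (g s) \<le> C * exp (k * s)"
  shows "exp (- k * u) * norm (integral {0..u} g) \<le> C / k"
proof -
  have C: "C \<ge> 0"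
    using order_trans[OF norm_ge_zero bound[of 0]] u by simp
  have "((\<lambda>s. C * exp (k * s)) has_integral C * exp (k * u) / k - C * exp (k * 0) / k) {0..u}"
  proof (rule fundamental_theorem_of_calculus)
    fix s assume "s \<in> {0..u}"
    show "((\<lambda>s. C * exp (k * s) / k) has_vector_derivative C * exp (k * s)) (at s within {0..u})"
      using k by (auto intro!: derivative_eq_intros simp flip: has_real_derivative_iff_has_vector_derivative)
  qed (use u in simp)
  note primitive = this
  have "norm (integral {0..u} g) \<le> integral {0..u} (\<lambda>s. C * exp (k * s))"
    by (rule integral_norm_bound_integral[OF g has_integral_integrable[OF primitive] bound])
  also have "\<dots> = C * (exp (k * u) - 1) / k"
    by (subst integral_unique[OF primitive]) (simp add: diff_divide_distrib right_diff_distrib)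
  finally have "norm (integral {0..u} g) \<le> C * (exp (k * u) - 1) / k" .
  then have "exp (- k * u) * norm (integral {0..u} g) \<le> exp (- k * u) * (C * (exp (k * u) - 1) / k)"
    by (rule mult_left_mono) simp
  also have "\<dots> = C * (1 - exp (- k * u)) / k"
    by (simp add: field_simps flip: exp_add)
  also have "\<dots> \<le> C / k"
    using k C by (simp add: divide_right_mono mult_left_le)
  finally show ?thesis .
qed

lemma integral_has_vector_derivative_nonneg:
  fixes g :: "real \<Rightarrow> 'a::banach"
  assumes "continuous_on {0..} g" "t \<ge> 0"
  shows "((\<lambda>u. integral {0..u} g) has_vector_derivative g t) (at t within {0..})"
proof -
  have "at t within {0..} = at t within {0..t + 1}"
    by (rule at_within_nhd[where S = "{t - 1<..<t + 1}"]) auto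
  moreover have "((\<lambda>u. integral {0..u} g) has_vector_derivative g t) (at t within {0..t + 1})"
    using assms by (intro integral_has_vector_derivative continuous_on_subset[OF assms(1)]) auto
  ultimately show ?thesis by simp
qed

lemma continuous_on_integral_max:
  fixes g :: "real \<Rightarrow> 'a::banach"
  assumes "continuous_on UNIV g"
  shows "continuous_on UNIV (\<lambda>t. integral {0..max 0 t} g)"
proof -
  have "isCont (\<lambda>t. integral {0..max 0 t} g) t" for t
  proof (rule continuous_on_interior)
    show "continuous_on {-(\<bar>t\<bar> + 1)..\<bar>t\<bar> + 1} (\<lambda>t. integral {0..max 0 t} g)"
      by (rule continuous_on_compose2[of "{0..\<bar>t\<bar> + 1}" "\<lambda>u. integral {0..u} g"])
        (auto intro!: continuous_intros indefinite_integral_continuous_1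
          integrable_continuous_interval continuous_on_subset[OF assms])
  qed auto
  then show ?thesis
    by (simp add: continuous_on_eq_continuous_at)
qed

text \<open>Picard operator for the rescaled unknown \<open>\<psi> t = exp (- k * t) *\<^sub>R \<phi> t\<close>, frozen for
  negative times. For \<open>k\<close> large compared with the Lipschitz constant of \<open>F\<close> it is a contraction
  for the supremum norm on the whole half-line.\<close>
definition weighted_picard :: "real \<Rightarrow> ('a::banach \<Rightarrow> 'a) \<Rightarrow> 'a \<Rightarrow> (real \<Rightarrow>\<^sub>C 'a) \<Rightarrow> real \<Rightarrow> 'a"
  where "weighted_picard k F y0 \<psi> t =
    exp (- k * max 0 t) *\<^sub>R (y0 + integral {0..max 0 t} (\<lambda>s. F (exp (k * s) *\<^sub>R \<psi> s)))"

lemma continuous_on_weighted_integrand: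
  fixes F :: "'a::real_normed_vector \<Rightarrow> 'b::topological_space"
  shows "continuous_on UNIV F \<Longrightarrow> continuous_on A (\<lambda>s. F (exp (k * s) *\<^sub>R apply_bcontfun \<psi> s))"
  by (rule continuous_on_compose2[of UNIV F]) (auto intro!: continuous_intros)

lemma weighted_picard_bcontfun:
  fixes F :: "'a::banach \<Rightarrow> 'a"
  assumes contF: "continuous_on UNIV F" and M: "\<And>y. norm (F y) \<le> M" and k: "k > 0"
  shows "weighted_picard k F y0 \<psi> \<in> bcontfun"
proof (rule bcontfun_normI)
  let ?g = "\<lambda>s. F (exp (k * s) *\<^sub>R apply_bcontfun \<psi> s)"
  show "continuous_on UNIV (weighted_picard k F y0 \<psi>)"
    unfolding weighted_picard_def
    by (intro continuous_intros continuous_on_integral_max continuous_on_weighted_integrand contF)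
  fix t :: real
  define u where "u = max 0 t"
  have M0: "M \<ge> 0"
    using order_trans[OF norm_ge_zero M] by blast
  have "norm (?g s) \<le> M * exp (k * s)" if "s \<in> {0..u}" for s
  proof -
    have "norm (?g s) \<le> M * 1"
      by (simp add: M)
    also have "\<dots> \<le> M * exp (k * s)"
      using that k M0 by (intro mult_left_mono) auto
    finally show ?thesis .
  qed
  then have "exp (- k * u) * norm (integral {0..u} ?g) \<le> M / k"
    using k by (intro weighted_integral_bound integrable_continuous_interval
        continuous_on_weighted_integrand contF) (auto simp: u_def)
  moreover have "exp (- k * u) * norm y0 \<le> norm y0"
    using k by (simp add: u_def mult_left_le_one_le)
  moreover have "norm (weighted_picard k F y0 \<psi> t) \<le> exp (- k * u) * (norm y0 + norm (integral {0..u} ?g))"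
    unfolding weighted_picard_def u_def[symmetric] by (simp add: mult_left_mono norm_triangle_ineq)
  ultimately show "norm (weighted_picard k F y0 \<psi> t) \<le> norm y0 + M / k"
    by (simp add: distrib_left)
qed

lemma weighted_picard_contraction:
  fixes F :: "'a::banach \<Rightarrow> 'a"
  assumes lip: "L-lipschitz_on UNIV F" and k: "k > 0"
  shows "dist (weighted_picard k F y0 \<psi>1 t) (weighted_picard k F y0 \<psi>2 t) \<le> L / k * dist \<psi>1 \<psi>2"
proof -
  define u where "u = max 0 t"
  define D where "D = dist \<psi>1 \<psi>2"
  let ?g = "\<lambda>\<psi> s. F (exp (k * s) *\<^sub>R apply_bcontfun \<psi> s)"
  have L: "L \<ge> 0"
    using lip by (rule lipschitz_on_nonneg)
  have int_g: "?g \<psi> integrable_on {0..u}" for \<psi>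
    using lipschitz_on_continuous_on[OF lip]
    by (intro integrable_continuous_interval continuous_on_weighted_integrand)
  have "norm (?g \<psi>1 s - ?g \<psi>2 s) \<le> (L * D) * exp (k * s)" for s
  proof -
    have "norm (?g \<psi>1 s - ?g \<psi>2 s)
        \<le> L * dist (exp (k * s) *\<^sub>R apply_bcontfun \<psi>1 s) (exp (k * s) *\<^sub>R apply_bcontfun \<psi>2 s)"
      unfolding dist_norm[symmetric] by (rule lipschitz_onD[OF lip]) auto
    also have "\<dots> = L * (exp (k * s) * dist (apply_bcontfun \<psi>1 s) (apply_bcontfun \<psi>2 s))"
      by (simp add: dist_norm flip: scaleR_diff_right)
    also have "\<dots> \<le> L * (exp (k * s) * D)"
      unfolding D_def using L by (intro mult_left_mono dist_bounded) auto
    finally show ?thesis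
      by (simp add: ac_simps)
  qed
  then have "exp (- k * u) * norm (integral {0..u} (\<lambda>s. ?g \<psi>1 s - ?g \<psi>2 s)) \<le> L * D / k"
    using k by (intro weighted_integral_bound integrable_diff int_g) (auto simp: u_def)
  then show ?thesis
    by (simp add: weighted_picard_def dist_norm integral_diff int_g D_def u_def[symmetric]
        flip: scaleR_diff_right)
qed

lemma weighted_picard_fixpoint_solves:
  fixes F :: "'a::banach \<Rightarrow> 'a"
  assumes contF: "continuous_on UNIV F" and fixpoint: "\<And>t. weighted_picard k F y0 \<psi> t = \<psi> t"
    and t: "t \<ge> 0"
  defines "\<phi> \<equiv> \<lambda>t. y0 + integral {0..t} (\<lambda>s. F (exp (k * s) *\<^sub>R \<psi> s))"
  shows "(\<phi> has_vector_derivative F (\<phi> t)) (at t within {0..})"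
proof -
  have "exp (k * t) *\<^sub>R \<psi> t = \<phi> t"
    unfolding fixpoint[of t, symmetric] using t by (simp add: \<phi>_def weighted_picard_def flip: exp_add)
  moreover have "(\<phi> has_vector_derivative F (exp (k * t) *\<^sub>R \<psi> t)) (at t within {0..})"
    unfolding \<phi>_def
    using has_vector_derivative_add[OF has_vector_derivative_const
        integral_has_vector_derivative_nonneg[OF continuous_on_weighted_integrand[OF contF] t]]
    by simp
  ultimately show ?thesis
    by simp
qed

lemma lipschitz_ode_global_existence:
  fixes F :: "'a::banach \<Rightarrow> 'a" and y\<^sub>0 :: 'a
  assumes lip: "L-lipschitz_on UNIV F" and bnd: "bounded (range F)"
  obtains \<phi> where "\<phi> 0 = y\<^sub>0" "\<And>t. t \<ge> 0 \<Longrightarrow> (\<phi> has_vector_derivative F (\<phi> t)) (at t within {0..})"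
proof -
  obtain M where M: "\<And>y. norm (F y) \<le> M"
    using bnd by (auto simp: bounded_iff)
  define k where "k = 2 * L + 2"
  have k: "k > 0" "L / k \<le> 1 / 2"
    using lipschitz_on_nonneg[OF lip] by (auto simp: k_def field_simps)
  have contF: "continuous_on UNIV F"
    using lip by (rule lipschitz_on_continuous_on)
  let ?T = "\<lambda>\<psi>. Bcontfun (weighted_picard k F y\<^sub>0 \<psi>)"
  have "dist (?T \<psi>1) (?T \<psi>2) \<le> 1 / 2 * dist \<psi>1 \<psi>2" for \<psi>1 \<psi>2
  proof (rule dist_bound)
    fix t
    have "dist (?T \<psi>1 t) (?T \<psi>2 t) \<le> L / k * dist \<psi>1 \<psi>2"
      using weighted_picard_contraction[OF lip k(1)]
      by (simp add: Bcontfun_inverse weighted_picard_bcontfun[OF contF M k(1)])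
    also have "\<dots> \<le> 1 / 2 * dist \<psi>1 \<psi>2"
      using k(2) by (rule mult_right_mono) simp
    finally show "dist (?T \<psi>1 t) (?T \<psi>2 t) \<le> 1 / 2 * dist \<psi>1 \<psi>2" .
  qed
  then obtain \<psi> where "?T \<psi> = \<psi>"
    using banach_fix_type[of "1 / 2" ?T] by auto
  then have fixpoint: "weighted_picard k F y\<^sub>0 \<psi> t = \<psi> t" for t
    by (metis Bcontfun_inverse weighted_picard_bcontfun[OF contF M k(1)])
  show ?thesis
    by (rule that[OF _ weighted_picard_fixpoint_solves[OF contF fixpoint]]) simp
qed

section \<open>Uniqueness\<close>

lemma continuous_on_of_vector_derivative:
  assumes "\<And>t. t \<in> S \<Longrightarrow> (y has_vector_derivative y' t) (at t within S)"
  shows "continuous_on S y"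
  unfolding continuous_on_eq_continuous_within using assms by (blast intro: has_vector_derivative_continuous)

lemma ode_difference_bound:
  fixes F :: "'a::real_normed_vector \<Rightarrow> 'a"
  assumes y: "\<And>t. t \<ge> 0 \<Longrightarrow> (y has_vector_derivative F (y t)) (at t within {0..})"
    and z: "\<And>t. t \<ge> 0 \<Longrightarrow> (z has_vector_derivative F (z t)) (at t within {0..})"
    and a: "0 \<le> a" and ab: "a \<le> b" and lip: "L-lipschitz_on K F"
    and in_K: "\<And>t. t \<in> {a..b} \<Longrightarrow> y t \<in> K \<and> z t \<in> K"
    and E: "\<And>t. t \<in> {a..b} \<Longrightarrow> norm (y t - z t) \<le> E"
  shows "norm ((y b - z b) - (y a - z a)) \<le> L * E * (b - a)"
proof -
  have "norm ((y b - z b) - (y a - z a)) \<le> (L * E) * norm (b - a)"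
  proof (rule differentiable_bound[where f' = "\<lambda>t h. h *\<^sub>R (F (y t) - F (z t))"])
    fix t assume t: "t \<in> {a..b}"
    have "((\<lambda>t. y t - z t) has_vector_derivative F (y t) - F (z t)) (at t within {0..})"
      using t a by (intro has_vector_derivative_diff y z) auto
    then show "((\<lambda>t. y t - z t) has_derivative (\<lambda>h. h *\<^sub>R (F (y t) - F (z t)))) (at t within {a..b})"
      unfolding has_vector_derivative_def by (rule has_derivative_subset) (use a in auto)
    have "norm (F (y t) - F (z t)) \<le> L * norm (y t - z t)"
      using lipschitz_onD[OF lip] in_K[OF t] by (simp add: dist_norm)
    also have "\<dots> \<le> L * E"
      using E[OF t] lipschitz_on_nonneg[OF lip] by (rule mult_left_mono)
    finally show "onorm (\<lambda>h. h *\<^sub>R (F (y t) - F (z t))) \<le> L * E"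
      by (simp add: onorm_scaleR_left[OF bounded_linear_ident] onorm_id)
  qed (use ab in auto)
  then show ?thesis
    using ab by simp
qed

lemma ode_solutions_agree_locally:
  fixes F :: "'a::real_normed_vector \<Rightarrow> 'a"
  assumes y: "\<And>t. t \<ge> 0 \<Longrightarrow> (y has_vector_derivative F (y t)) (at t within {0..})"
    and z: "\<And>t. t \<ge> 0 \<Longrightarrow> (z has_vector_derivative F (z t)) (at t within {0..})"
    and t0: "t0 \<ge> 0" "y t0 = z t0"
    and lip: "L-lipschitz_on (cball (y t0) r) F" and r: "r > 0"
  obtains \<delta> where "\<delta> > 0" "\<And>t. t \<in> {t0..t0 + \<delta>} \<Longrightarrow> y t = z t"
proof -
  have L: "L \<ge> 0"
    using lip by (rule lipschitz_on_nonneg)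
  have cont: "continuous_on {0..} y" "continuous_on {0..} z"
    by (rule continuous_on_of_vector_derivative, use y z in auto)+
  obtain dy where dy: "dy > 0" "\<And>t. t \<in> {0..} \<Longrightarrow> dist t t0 < dy \<Longrightarrow> dist (y t) (y t0) < r"
    using cont(1) t0 r unfolding continuous_on_iff by (metis atLeast_iff)
  obtain dz where dz: "dz > 0" "\<And>t. t \<in> {0..} \<Longrightarrow> dist t t0 < dz \<Longrightarrow> dist (z t) (z t0) < r"
    using cont(2) t0 r unfolding continuous_on_iff by (metis atLeast_iff)
  define d where "d = min dy dz"
  have d: "d > 0" "\<And>t. t \<ge> 0 \<Longrightarrow> dist t t0 < d \<Longrightarrow> y t \<in> cball (y t0) r \<and> z t \<in> cball (y t0) r"
    using dy dz t0(2) by (auto simp: d_def dist_commute less_imp_le)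
  define \<delta> where "\<delta> = min (d / 2) (1 / (2 * L + 2))"
  have \<delta>: "\<delta> > 0" "\<delta> < d"
    using d L by (auto simp: \<delta>_def)
  have "L * \<delta> \<le> L * (1 / (2 * L + 2))"
    using L by (intro mult_left_mono) (auto simp: \<delta>_def)
  also have "\<dots> \<le> 1 / 2"
    using L by (simp add: field_simps)
  finally have L\<delta>: "L * \<delta> \<le> 1 / 2" .
  define e where "e t = norm (y t - z t)" for t
  have "continuous_on {t0..t0 + \<delta>} e"
    unfolding e_def using t0 by (intro continuous_intros continuous_on_subset[OF cont(1)]
        continuous_on_subset[OF cont(2)]) auto
  then obtain \<tau> where \<tau>: "\<tau> \<in> {t0..t0 + \<delta>}" "\<And>t. t \<in> {t0..t0 + \<delta>} \<Longrightarrow> e t \<le> e \<tau>"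
    using continuous_attains_sup[of "{t0..t0 + \<delta>}" e] \<delta> by auto
  have near: "y t \<in> cball (y t0) r \<and> z t \<in> cball (y t0) r" if "t \<in> {t0..\<tau>}" for t
    using d(2)[of t] that \<tau>(1) t0 \<delta>(2) by (auto simp: dist_real_def)
  txt \<open>Since \<open>L * \<delta> \<le> 1/2\<close>, the maximal error \<open>e \<tau>\<close> on the window is at most half of itself.\<close>
  have "norm ((y \<tau> - z \<tau>) - (y t0 - z t0)) \<le> L * e \<tau> * (\<tau> - t0)"
    using \<tau> near by (intro ode_difference_bound[OF y z t0(1) _ lip]) (auto simp: e_def)
  then have "e \<tau> \<le> (L * e \<tau>) * (\<tau> - t0)"
    using t0(2) by (simp add: e_def)
  also have "\<dots> \<le> (L * e \<tau>) * \<delta>"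
    using \<tau>(1) L by (intro mult_left_mono) (auto simp: e_def)
  also have "\<dots> = (L * \<delta>) * e \<tau>"
    by simp
  also have "\<dots> \<le> 1 / 2 * e \<tau>"
    using L\<delta> by (rule mult_right_mono) (simp add: e_def)
  finally have e\<tau>: "e \<tau> = 0"
    by (simp add: e_def)
  show ?thesis
  proof (rule that[OF \<delta>(1)])
    fix t assume "t \<in> {t0..t0 + \<delta>}"
    then have "e t \<le> 0"
      using \<tau>(2) e\<tau> by metis
    then show "y t = z t"
      by (simp add: e_def)
  qed
qed

lemma ode_solutions_unique:
  fixes F :: "'a::real_normed_vector \<Rightarrow> 'a"
  assumes y: "\<And>t. t \<ge> 0 \<Longrightarrow> (y has_vector_derivative F (y t)) (at t within {0..})"
    and z: "\<And>t. t \<ge> 0 \<Longrightarrow> (z has_vector_derivative F (z t)) (at t within {0..})"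
    and init: "y 0 = z 0"
    and lip: "\<And>t. t \<ge> 0 \<Longrightarrow> \<exists>r>0. \<exists>L. L-lipschitz_on (cball (y t) r) F"
    and t: "t \<ge> 0"
  shows "y t = z t"
proof (rule ccontr)
  assume "y t \<noteq> z t"
  define A where "A = {s. s \<ge> 0 \<and> y s \<noteq> z s}"
  have A: "t \<in> A" "bdd_below A"
    using \<open>y t \<noteq> z t\<close> t by (auto simp: A_def bdd_below_def)
  define t0 where "t0 = Inf A"
  have t0: "t0 \<ge> 0"
    unfolding t0_def using A by (intro cInf_greatest) (auto simp: A_def)
  have before: "y s = z s" if "s \<in> {0..<t0}" for s
    using cInf_lower[OF _ A(2), of s] that by (auto simp: A_def t0_def)
  have "y t0 = z t0"
  proof (cases "t0 = 0")
    case False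
    have "continuous_on {0..} (\<lambda>s. y s - z s)"
      by (intro continuous_intros; rule continuous_on_of_vector_derivative, use y z in auto)
    then have "continuous_on (closure {0..<t0}) (\<lambda>s. y s - z s)"
      by (rule continuous_on_subset) (use t0 False in auto)
    then show ?thesis
      using continuous_constant_on_closure[of "{0..<t0}" "\<lambda>s. y s - z s" 0 t0] before t0 False by auto
  qed (use init in simp)
  moreover obtain r L where "r > 0" "L-lipschitz_on (cball (y t0) r) F"
    using lip[OF t0] by blast
  ultimately obtain \<delta> where "\<delta> > 0" "\<And>s. s \<in> {t0..t0 + \<delta>} \<Longrightarrow> y s = z s"
    using ode_solutions_agree_locally[OF y z t0] by metis
  moreover obtain a where "a \<in> A" "a < t0 + \<delta>"
    using cInf_less_iff[of A "t0 + \<delta>"] A \<open>\<delta> > 0\<close> by (auto simp: t0_def)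
  moreover have "t0 \<le> a"
    using cInf_lower[OF \<open>a \<in> A\<close> A(2)] by (simp add: t0_def)
  ultimately show False
    by (auto simp: A_def)
qed

section \<open>Invariant bounds for scalar functions\<close>

lemma le_invariant:
  fixes u u' :: "real \<Rightarrow> real"
  assumes der: "\<And>t. t \<ge> 0 \<Longrightarrow> (u has_real_derivative u' t) (at t within {0..})"
    and init: "u 0 \<le> c" and inward: "\<And>t. t \<ge> 0 \<Longrightarrow> u t > c \<Longrightarrow> u' t \<le> 0"
    and t: "t \<ge> 0"
  shows "u t \<le> c"
proof (rule ccontr)
  assume "\<not> u t \<le> c"
  have cont: "continuous_on {0..} u"
    using der by (auto intro: DERIV_continuous simp: continuous_on_eq_continuous_within)
  define Z where "Z = {s \<in> {0..t}. u s \<le> c}"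
  have "closed Z"
    unfolding Z_def by (intro continuous_on_closed_Collect_le continuous_on_subset[OF cont]) auto
  moreover have "0 \<in> Z" "bdd_above Z"
    using init t by (auto simp: Z_def)
  ultimately have "Sup Z \<in> Z"
    by (intro closed_contains_Sup) auto
  define s where "s = Sup Z"
  have s: "0 \<le> s" "s \<le> t" "u s \<le> c"
    using \<open>Sup Z \<in> Z\<close> by (auto simp: Z_def s_def)
  have above: "u v > c" if "s < v" "v \<le> t" for v
    using cSup_upper[of v Z] \<open>bdd_above Z\<close> that s by (force simp: Z_def s_def)
  txt \<open>After the last time \<open>s\<close> at which \<open>u \<le> c\<close>, the function \<open>u\<close> cannot increase.\<close>
  have "u t \<le> u s"
  proof (rule DERIV_nonpos_imp_decreasing_open[OF s(2)])
    fix v assume v: "s < v" "v < t"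
    have "at v within {0..} = at v"
      using v s by (intro at_within_interior) auto
    then show "\<exists>y. (u has_real_derivative y) (at v) \<and> y \<le> 0"
      using der[of v] inward[of v] above[of v] v s by auto
  qed (use cont s in \<open>auto intro: continuous_on_subset\<close>)
  then show False
    using \<open>\<not> u t \<le> c\<close> s by linarith
qed

lemma ge_invariant:
  fixes u u' :: "real \<Rightarrow> real"
  assumes der: "\<And>t. t \<ge> 0 \<Longrightarrow> (u has_real_derivative u' t) (at t within {0..})"
    and init: "u 0 \<ge> c" and inward: "\<And>t. t \<ge> 0 \<Longrightarrow> u t < c \<Longrightarrow> u' t \<ge> 0"
    and t: "t \<ge> 0"
  shows "u t \<ge> c"
  using le_invariant[of "\<lambda>t. - u t" "\<lambda>t. - u' t" "- c" t] der init inward t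
  by (auto intro: derivative_intros)

section \<open>Bounded Lipschitz functions\<close>

definition bounded_lipschitz_on :: "'a::metric_space set \<Rightarrow> ('a \<Rightarrow> 'b::real_normed_vector) \<Rightarrow> bool"
  where "bounded_lipschitz_on S f \<longleftrightarrow> bounded (f ` S) \<and> (\<exists>L. L-lipschitz_on S f)"

lemma bounded_lipschitz_onE:
  assumes "bounded_lipschitz_on S f"
  obtains K L where "K \<ge> 0" "\<And>p. p \<in> S \<Longrightarrow> norm (f p) \<le> K" "L-lipschitz_on S f"
proof -
  obtain K L where "K > 0" "\<forall>y\<in>f ` S. norm y \<le> K" "L-lipschitz_on S f"
    using assms unfolding bounded_lipschitz_on_def bounded_pos by blast
  then show ?thesis
    using that[of K L] by auto
qed

lemma bounded_lipschitz_on_const: "bounded_lipschitz_on S (\<lambda>p. c)"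
  unfolding bounded_lipschitz_on_def by (auto simp: image_constant_conv intro: lipschitz_on_constant)

lemma bounded_lipschitz_on_linear:
  "bounded_linear f \<Longrightarrow> bounded S \<Longrightarrow> bounded_lipschitz_on S f"
  unfolding bounded_lipschitz_on_def
  by (blast intro: bounded_linear_image elim: bounded_linear.lipschitz_boundE)

lemma bounded_lipschitz_on_add:
  "bounded_lipschitz_on S f \<Longrightarrow> bounded_lipschitz_on S g \<Longrightarrow> bounded_lipschitz_on S (\<lambda>p. f p + g p)"
  unfolding bounded_lipschitz_on_def by (blast intro: bounded_plus_comp lipschitz_on_add)

lemma bounded_lipschitz_on_diff:
  "bounded_lipschitz_on S f \<Longrightarrow> bounded_lipschitz_on S g \<Longrightarrow> bounded_lipschitz_on S (\<lambda>p. f p - g p)"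
  unfolding bounded_lipschitz_on_def by (blast intro: bounded_minus_comp lipschitz_on_diff)

lemma bounded_lipschitz_on_Pair:
  "bounded_lipschitz_on S f \<Longrightarrow> bounded_lipschitz_on S g \<Longrightarrow> bounded_lipschitz_on S (\<lambda>p. (f p, g p))"
proof -
  assume "bounded_lipschitz_on S f" "bounded_lipschitz_on S g"
  then have "bounded (f ` S \<times> g ` S)" "\<exists>L. L-lipschitz_on S (\<lambda>p. (f p, g p))"
    unfolding bounded_lipschitz_on_def by (auto intro: bounded_Times lipschitz_on_Pair)
  moreover have "(\<lambda>p. (f p, g p)) ` S \<subseteq> f ` S \<times> g ` S"
    by auto
  ultimately show ?thesis
    unfolding bounded_lipschitz_on_def by (blast intro: bounded_subset)
qed

lemma bounded_lipschitz_on_mult: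
  fixes f g :: "'a::metric_space \<Rightarrow> real"
  assumes f: "bounded_lipschitz_on S f" and g: "bounded_lipschitz_on S g"
  shows "bounded_lipschitz_on S (\<lambda>p. f p * g p)"
proof -
  obtain Kf Lf where Kf: "Kf \<ge> 0" "\<And>p. p \<in> S \<Longrightarrow> \<bar>f p\<bar> \<le> Kf" and Lf: "Lf-lipschitz_on S f"
    using bounded_lipschitz_onE[OF f] by (metis real_norm_def)
  obtain Kg Lg where Kg: "Kg \<ge> 0" "\<And>p. p \<in> S \<Longrightarrow> \<bar>g p\<bar> \<le> Kg" and Lg: "Lg-lipschitz_on S g"
    using bounded_lipschitz_onE[OF g] by (metis real_norm_def)
  have "(Kf * Lg + Kg * Lf)-lipschitz_on S (\<lambda>p. f p * g p)"
  proof (rule lipschitz_onI)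
    fix p q assume pq: "p \<in> S" "q \<in> S"
    have "f p * g p - f q * g q = f p * (g p - g q) + g q * (f p - f q)"
      by (simp add: algebra_simps)
    then have "dist (f p * g p) (f q * g q) \<le> \<bar>f p\<bar> * dist (g p) (g q) + \<bar>g q\<bar> * dist (f p) (f q)"
      by (metis abs_mult abs_triangle_ineq dist_real_def)
    also have "\<dots> \<le> Kf * (Lg * dist p q) + Kg * (Lf * dist p q)"
      using pq Kf Kg lipschitz_onD[OF Lf] lipschitz_onD[OF Lg]
      by (intro add_mono mult_mono) auto
    finally show "dist (f p * g p) (f q * g q) \<le> (Kf * Lg + Kg * Lf) * dist p q"
      by (simp add: algebra_simps)
  qed (use Kf Kg lipschitz_on_nonneg[OF Lf] lipschitz_on_nonneg[OF Lg] in simp)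
  moreover have "bounded ((\<lambda>p. f p * g p) ` S)"
    unfolding bounded_real using Kf Kg by (auto simp: abs_mult intro!: exI[of _ "Kf * Kg"] mult_mono)
  ultimately show ?thesis
    unfolding bounded_lipschitz_on_def by blast
qed

lemma bounded_lipschitz_on_compose_C1:
  fixes g :: "'a::metric_space \<Rightarrow> real"
  assumes g: "bounded_lipschitz_on S g" and range: "\<And>p. p \<in> S \<Longrightarrow> g p \<in> {a..b}"
    and \<phi>: "\<And>u. u \<in> {a..b} \<Longrightarrow> (\<phi> has_real_derivative \<phi>' u) (at u)"
    and cont: "continuous_on {a..b} \<phi>'"
  shows "bounded_lipschitz_on S (\<lambda>p. \<phi> (g p))"
proof -
  obtain B where B: "B > 0" "\<And>u. u \<in> {a..b} \<Longrightarrow> \<bar>\<phi>' u\<bar> \<le> B"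
    using compact_imp_bounded[OF compact_continuous_image[OF cont compact_Icc]]
    by (auto simp: bounded_pos)
  have "B-lipschitz_on {a..b} \<phi>"
  proof (rule lipschitz_onI)
    fix u v assume "u \<in> {a..b}" "v \<in> {a..b}"
    then have "norm (\<phi> u - \<phi> v) \<le> B * norm (u - v)"
      using B \<phi> by (intro field_differentiable_bound[of "{a..b}" \<phi> \<phi>'])
        (auto intro: has_field_derivative_at_within)
    then show "dist (\<phi> u) (\<phi> v) \<le> B * dist u v"
      by (simp add: dist_real_def)
  qed (use B in simp)
  moreover obtain L where "L-lipschitz_on S g"
    using g by (auto simp: bounded_lipschitz_on_def)
  ultimately have "(B * L)-lipschitz_on S (\<lambda>p. \<phi> (g p))"
    using range by (intro lipschitz_on_compose2) (auto intro: lipschitz_on_subset)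
  moreover have "continuous_on {a..b} \<phi>"
    using \<phi> by (meson DERIV_isCont continuous_at_imp_continuous_on)
  then have "bounded (\<phi> ` {a..b})"
    by (intro compact_imp_bounded compact_continuous_image) auto
  then have "bounded ((\<lambda>p. \<phi> (g p)) ` S)"
    by (rule bounded_subset) (use range in auto)
  ultimately show ?thesis
    unfolding bounded_lipschitz_on_def by blast
qed

lemma bounded_lipschitz_on_range:
  fixes g :: "'a::metric_space \<Rightarrow> real"
  assumes "bounded_lipschitz_on S g"
  obtains K where "\<And>p. p \<in> S \<Longrightarrow> g p \<in> {-K..K}"
proof -
  obtain K where "\<And>p. p \<in> S \<Longrightarrow> \<bar>g p\<bar> \<le> K"
    using bounded_lipschitz_onE[OF assms] by (metis real_norm_def)
  then have "g p \<in> {-K..K}" if "p \<in> S" for p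
    using that by (force simp: abs_le_iff)
  then show ?thesis
    by (rule that)
qed

lemma bounded_lipschitz_on_exp:
  fixes g :: "'a::metric_space \<Rightarrow> real"
  shows "bounded_lipschitz_on S g \<Longrightarrow> bounded_lipschitz_on S (\<lambda>p. exp (g p))"
proof -
  assume g: "bounded_lipschitz_on S g"
  obtain K where "\<And>p. p \<in> S \<Longrightarrow> g p \<in> {-K..K}"
    using bounded_lipschitz_on_range[OF g] by blast
  then show ?thesis
    by (elim bounded_lipschitz_on_compose_C1[OF g]) (auto intro: DERIV_exp continuous_intros)
qed

lemma bounded_lipschitz_on_powr:
  fixes g :: "'a::metric_space \<Rightarrow> real"
  assumes g: "bounded_lipschitz_on S g" and c: "c > 0" "\<And>p. p \<in> S \<Longrightarrow> g p \<ge> c"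
  shows "bounded_lipschitz_on S (\<lambda>p. g p powr r)"
proof -
  obtain K where "\<And>p. p \<in> S \<Longrightarrow> g p \<in> {-K..K}"
    using bounded_lipschitz_on_range[OF g] by blast
  then have "\<And>p. p \<in> S \<Longrightarrow> g p \<in> {c..K}"
    using c by auto
  then show ?thesis
    using c(1) by (elim bounded_lipschitz_on_compose_C1[OF g, of _ _ _ "\<lambda>u. r * u powr (r - 1)"])
      (auto intro!: has_real_derivative_powr continuous_intros)
qed

lemma bounded_lipschitz_on_divide:
  fixes f g :: "'a::metric_space \<Rightarrow> real"
  assumes f: "bounded_lipschitz_on S f" and g: "bounded_lipschitz_on S g"
    and c: "c > 0" "\<And>p. p \<in> S \<Longrightarrow> g p \<ge> c"
  shows "bounded_lipschitz_on S (\<lambda>p. f p / g p)"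
proof -
  obtain K where "\<And>p. p \<in> S \<Longrightarrow> g p \<in> {-K..K}"
    using bounded_lipschitz_on_range[OF g] by blast
  then have "\<And>p. p \<in> S \<Longrightarrow> g p \<in> {c..K}"
    using c by auto
  then have "bounded_lipschitz_on S (\<lambda>p. inverse (g p))"
    using c(1) by (elim bounded_lipschitz_on_compose_C1[OF g, of _ _ _ "\<lambda>u. - inverse (u ^ 2)"])
      (auto intro!: derivative_eq_intros continuous_intros simp: power2_eq_square)
  then show ?thesis
    using bounded_lipschitz_on_mult[OF f] by (simp add: divide_inverse)
qed

lemma has_vector_derivative_Pair_iff:
  "((\<lambda>t. (f t, g t)) has_vector_derivative (f', g')) (at t within S) \<longleftrightarrow>
    (f has_vector_derivative f') (at t within S) \<and> (g has_vector_derivative g') (at t within S)"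
  using bounded_linear.has_vector_derivative[OF bounded_linear_fst, of "\<lambda>t. (f t, g t)" "(f', g')"]
    bounded_linear.has_vector_derivative[OF bounded_linear_snd, of "\<lambda>t. (f t, g t)" "(f', g')"]
  by (auto intro: has_vector_derivative_Pair)

lemma inner_clamp_Basis:
  assumes "\<forall>i\<in>Basis. a \<bullet> i \<le> b \<bullet> i" "j \<in> Basis"
  shows "clamp a b x \<bullet> j = min (max (a \<bullet> j) (x \<bullet> j)) (b \<bullet> j)"
  using assms by (simp add: clamp_def)

lemma clamp_real: "a \<le> b \<Longrightarrow> clamp a b (x::real) = max a (min b x)"
  using inner_clamp_Basis[of a b 1 x] by (simp add: max_def min_def)

lemma clamp_Pair:
  fixes a b x :: "'a::euclidean_space" and c d y :: "'b::euclidean_space"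
  assumes "\<forall>i\<in>Basis. a \<bullet> i \<le> b \<bullet> i" "\<forall>i\<in>Basis. c \<bullet> i \<le> d \<bullet> i"
  shows "clamp (a, c) (b, d) (x, y) = (clamp a b x, clamp c d y)"
proof -
  have le: "\<forall>i\<in>Basis. (a, c) \<bullet> i \<le> (b, d) \<bullet> i"
    using assms by (auto simp: Basis_prod_def)
  show ?thesis
    by (rule euclidean_eqI) (auto simp: Basis_prod_def inner_clamp_Basis[OF le] inner_clamp_Basis assms)
qed

lemma clamp_triple:
  fixes a1 a2 a3 b1 b2 b3 x1 x2 x3 :: real
  assumes "a1 \<le> b1" "a2 \<le> b2" "a3 \<le> b3"
  shows "clamp (a1, a2, a3) (b1, b2, b3) (x1, x2, x3) =
    (max a1 (min b1 x1), max a2 (min b2 x2), max a3 (min b3 x3))"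
  using assms by (simp add: clamp_Pair clamp_real Basis_prod_def)

section \<open>The tumour acidity model\<close>

definition tumor_field :: "params \<Rightarrow> real \<times> real \<times> real \<Rightarrow> real \<times> real \<times> real" where
  "tumor_field P p =
    (fx P (fst p) (fst (snd p)) (snd (snd p)), fh P (fst p) (fst (snd p)) (snd (snd p)),
     fn P (fst p) (fst (snd p)) (snd (snd p)))"

lemma tumor_field_eq [simp]: "tumor_field P (x, h, n) = (fx P x h n, fh P x h n, fn P x h n)"
  by (simp add: tumor_field_def)

lemma is_solution_iff_vector:
  "is_solution P x h n \<longleftrightarrow> (\<forall>t\<ge>0.
    ((\<lambda>t. (x t, h t, n t)) has_vector_derivative tumor_field P (x t, h t, n t)) (at t within {0..}))"
  by (simp add: is_solution_def has_vector_derivative_Pair_iff has_real_derivative_iff_has_vector_derivative)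

lemma params_okD:
  assumes "params_ok P"
  shows "s0 P > 0" "lam P > 0" "hc P > 0" "cc P > 0" "phi P > 0" "dmax P > 0" "h50 P > 0"
    "mm P > 0" "mu0 P > 0" "pp P > 0" "nu P > 0" "alpha P > 0" "beta P > 0" "Kg P > 0"
    "gamma0 P > 0" "eta P > 0" "rr P > 0" "phi P \<le> 1"
  using assms by (auto simp: params_ok_def)

lemma tumor_field_bounded_lipschitz:
  assumes P: "params_ok P" and h1: "h1 > 0" and n1: "1 + eta P * n1 > 0"
  shows "bounded_lipschitz_on ({x1..x2} \<times> {h1..h2} \<times> {n1..n2}) (tumor_field P)"
proof -
  let ?S = "{x1..x2} \<times> {h1..h2} \<times> {n1..n2}"
  note p = params_okD[OF P]
  have "bounded ?S"
    by (intro bounded_Times compact_imp_bounded compact_Icc)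
  then have X: "bounded_lipschitz_on ?S (\<lambda>p. fst p)"
    and H: "bounded_lipschitz_on ?S (\<lambda>p. fst (snd p))"
    and N: "bounded_lipschitz_on ?S (\<lambda>p. snd (snd p))"
    by (auto intro!: bounded_lipschitz_on_linear bounded_linear_fst bounded_linear_snd
        bounded_linear_compose[of fst snd] bounded_linear_compose[of snd snd])
  note const = bounded_lipschitz_on_const
  have h_low: "\<And>p. p \<in> ?S \<Longrightarrow> h1 \<le> fst (snd p)"
    by auto
  have powr: "bounded_lipschitz_on ?S (\<lambda>p. fst (snd p) powr r)" for r
    using h1 h_low by (rule bounded_lipschitz_on_powr[OF H])
  have dS: "bounded_lipschitz_on ?S (\<lambda>p. dS P (fst (snd p)))"
    unfolding dS_def using p
    by (intro bounded_lipschitz_on_divide[where c = "h50 P powr mm P"] bounded_lipschitz_on_mult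
        bounded_lipschitz_on_add powr const) auto
  have Sf: "bounded_lipschitz_on ?S (\<lambda>p. Sf P (fst (snd p)))"
    unfolding Sf_def
    by (intro bounded_lipschitz_on_divide[where c = 1] bounded_lipschitz_on_add
        bounded_lipschitz_on_diff bounded_lipschitz_on_mult bounded_lipschitz_on_exp const H dS) auto
  have mu: "bounded_lipschitz_on ?S (\<lambda>p. muf P (fst (snd p)))"
    unfolding muf_def by (intro bounded_lipschitz_on_mult powr const)
  have G: "bounded_lipschitz_on ?S (\<lambda>p. Gf P (fst (snd p)))"
    unfolding Gf_def using p h1
    by (intro bounded_lipschitz_on_divide[where c = "Kg P + h1"] bounded_lipschitz_on_add const H) auto
  have Gamma: "bounded_lipschitz_on ?S (\<lambda>p. Gammaf P (snd (snd p)))"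
    unfolding Gammaf_def using p n1
    by (intro bounded_lipschitz_on_divide[where c = "1 + eta P * n1"] bounded_lipschitz_on_add
        bounded_lipschitz_on_mult const N) (auto intro: mult_left_mono)
  have D: "bounded_lipschitz_on ?S (\<lambda>p. Df P (fst (snd p)) (fst p))"
    unfolding Df_def by (intro bounded_lipschitz_on_mult bounded_lipschitz_on_diff const X dS)
  show ?thesis
    unfolding tumor_field_def fx_def fh_def fn_def
    by (intro bounded_lipschitz_on_Pair bounded_lipschitz_on_add bounded_lipschitz_on_diff
        bounded_lipschitz_on_mult const X H N Sf mu G Gamma D)
qed

lemma fx_one_nonpos: "params_ok P \<Longrightarrow> fx P 1 h n \<le> 0"
  using params_okD[of P] by (simp add: fx_def)

lemma fx_zero_nonneg: "params_ok P \<Longrightarrow> fx P 0 h n \<ge> 0"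
  using params_okD[of P] by (simp add: fx_def muf_def)

lemma fn_zero: "fn P x h 0 = 0"
  by (simp add: fn_def)

lemma dS_nonneg: "params_ok P \<Longrightarrow> dS P h \<ge> 0"
  using params_okD[of P] unfolding dS_def
  by (intro divide_nonneg_nonneg mult_nonneg_nonneg) auto

lemma fn_one_nonpos:
  assumes P: "params_ok P" and x: "0 \<le> x" "x \<le> 1"
  shows "fn P x h 1 \<le> 0"
proof -
  have "phi P * x \<le> 1 * 1"
    using params_okD[OF P] x by (intro mult_mono) auto
  then show ?thesis
    using dS_nonneg[OF P] by (simp add: fn_def Df_def)
qed

lemma fh_nonneg:
  assumes P: "params_ok P" and "0 \<le> x" "0 \<le> n" "0 < h" "h \<le> 1"
  shows "fh P x h n \<ge> 0"
proof -
  note p = params_okD[OF P]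
  have "0 \<le> alpha P * n * (1 + beta P * x) * Gf P h"
    using p assms by (simp add: Gf_def)
  moreover have "Gammaf P n * (h - 1) \<le> 0"
    using p assms by (intro mult_nonneg_nonpos) (auto simp: Gammaf_def)
  ultimately show ?thesis
    by (simp add: fh_def)
qed

text \<open>Acid production is at most \<open>alpha * (1 + beta)\<close> on the box, while the clearance is at least
  \<open>gamma0 / (1 + eta) * (h - 1)\<close>; \<open>h_upper\<close> is where the latter overtakes the former.\<close>
definition h_upper :: "params \<Rightarrow> real" where
  "h_upper P = 1 + alpha P * (1 + beta P) * (1 + eta P) / gamma0 P"

lemma fh_nonpos:
  assumes P: "params_ok P" and x: "0 \<le> x" "x \<le> 1" and n: "0 \<le> n" "n \<le> 1"
    and h: "h \<ge> h_upper P"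
  shows "fh P x h n \<le> 0"
proof -
  note p = params_okD[OF P]
  have "h_upper P \<ge> 1"
    using p by (simp add: h_upper_def)
  then have "h > 0"
    using h by linarith
  then have G: "0 \<le> Gf P h" "Gf P h \<le> 1"
    using p by (auto simp: Gf_def)
  have "alpha P * n * (1 + beta P * x) \<le> alpha P * 1 * (1 + beta P * 1)"
    using p x n by (intro mult_mono) auto
  then have "alpha P * n * (1 + beta P * x) * Gf P h \<le> alpha P * (1 + beta P) * 1"
    using p x n G by (intro mult_mono) auto
  also have "\<dots> = gamma0 P / (1 + eta P) * (h_upper P - 1)"
    using p by (simp add: h_upper_def)
  also have "\<dots> \<le> Gammaf P n * (h - 1)"
    using p n h unfolding Gammaf_def
    by (intro mult_mono divide_left_mono)
      (auto simp: h_upper_def mult_left_le intro!: mult_pos_pos add_pos_nonneg)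
  finally show ?thesis
    by (simp add: fh_def)
qed

lemma tumor_field_locally_lipschitz:
  assumes P: "params_ok P" and h: "h > 0" and n: "n \<ge> 0"
  shows "\<exists>r>0. \<exists>L. L-lipschitz_on (cball (x, h, n) r) (tumor_field P)"
proof -
  note p = params_okD[OF P]
  define r where "r = min (h / 2) (1 / (2 * eta P))"
  have r: "r > 0" "h - r > 0"
    using h p by (auto simp: r_def)
  have "eta P * r \<le> eta P * (1 / (2 * eta P))"
    using p by (intro mult_left_mono) (auto simp: r_def)
  moreover have "eta P * n \<ge> 0"
    using p n by simp
  ultimately have n_r: "1 + eta P * (n - r) > 0"
    using p by (simp add: right_diff_distrib)
  obtain L where "L-lipschitz_on ({x - r..x + r} \<times> {h - r..h + r} \<times> {n - r..n + r}) (tumor_field P)"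
    using tumor_field_bounded_lipschitz[OF P r(2) n_r, of "x - r" "x + r" "h + r" "n + r"]
    by (auto simp: bounded_lipschitz_on_def)
  moreover have "cball (x, h, n) r \<subseteq> {x - r..x + r} \<times> {h - r..h + r} \<times> {n - r..n + r}"
  proof
    fix q assume "q \<in> cball (x, h, n) r"
    then have "dist x (fst q) \<le> r" "dist h (fst (snd q)) \<le> r" "dist n (snd (snd q)) \<le> r"
      using dist_fst_le[of "(x, h, n)" q] dist_snd_le[of "(x, h, n)" q]
        dist_fst_le[of "(h, n)" "snd q"] dist_snd_le[of "(h, n)" "snd q"] by auto
    then show "q \<in> {x - r..x + r} \<times> {h - r..h + r} \<times> {n - r..n + r}"
      by (auto simp: dist_real_def mem_Times_iff)
  qed
  ultimately show ?thesis
    using r(1) by (blast intro: lipschitz_on_subset)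
qed

lemma clamped_tumor_solution_in_box:
  fixes \<phi> :: "real \<Rightarrow> real \<times> real \<times> real"
  assumes P: "params_ok P" and hmin: "0 < hmin" "hmin \<le> 1" and hmax: "h_upper P \<le> hmax"
    and der: "\<And>t. t \<ge> 0 \<Longrightarrow>
      (\<phi> has_vector_derivative tumor_field P (clamp (0, hmin, 0) (1, hmax, 1) (\<phi> t))) (at t within {0..})"
    and init: "\<phi> 0 \<in> cbox (0, hmin, 0) (1, hmax, 1)"
    and t: "t \<ge> 0"
  shows "\<phi> t \<in> cbox (0, hmin, 0) (1, hmax, 1)"
proof -
  define x where "x s = fst (\<phi> s)" for s
  define h where "h s = fst (snd (\<phi> s))" for s
  define n where "n s = snd (snd (\<phi> s))" for s
  define cx where "cx s = max 0 (min 1 (x s))" for s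
  define ch where "ch s = max hmin (min hmax (h s))" for s
  define cn where "cn s = max 0 (min 1 (n s))" for s
  have "h_upper P \<ge> 1"
    using params_okD[OF P] by (simp add: h_upper_def)
  then have "clamp (0, hmin, 0) (1, hmax, 1) (\<phi> s) = (cx s, ch s, cn s)" for s
    using clamp_triple[of 0 1 hmin hmax 0 1 "x s" "h s" "n s"] hmin hmax
    by (simp add: x_def h_def n_def cx_def ch_def cn_def)
  moreover have "(\<lambda>s. (x s, h s, n s)) = \<phi>"
    by (simp add: x_def h_def n_def)
  ultimately have "((\<lambda>s. (x s, h s, n s)) has_vector_derivative
      (fx P (cx s) (ch s) (cn s), fh P (cx s) (ch s) (cn s), fn P (cx s) (ch s) (cn s))) (at s within {0..})"
    if "s \<ge> 0" for s
    using der[OF that] by simp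
  then have dx: "\<And>s. s \<ge> 0 \<Longrightarrow> (x has_real_derivative fx P (cx s) (ch s) (cn s)) (at s within {0..})"
    and dh: "\<And>s. s \<ge> 0 \<Longrightarrow> (h has_real_derivative fh P (cx s) (ch s) (cn s)) (at s within {0..})"
    and dn: "\<And>s. s \<ge> 0 \<Longrightarrow> (n has_real_derivative fn P (cx s) (ch s) (cn s)) (at s within {0..})"
    by (simp_all add: has_vector_derivative_Pair_iff has_real_derivative_iff_has_vector_derivative)
  have init': "0 \<le> x 0" "x 0 \<le> 1" "hmin \<le> h 0" "h 0 \<le> hmax" "0 \<le> n 0" "n 0 \<le> 1"
    using init by (auto simp: x_def h_def n_def cbox_Pair_eq mem_Times_iff)
  have "x t \<le> 1"
    using fx_one_nonpos[OF P] by (intro le_invariant[OF dx init'(2) _ t]) (auto simp: cx_def min_def max_def)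
  moreover have "x t \<ge> 0"
    using fx_zero_nonneg[OF P] by (intro ge_invariant[OF dx init'(1) _ t]) (auto simp: cx_def min_def max_def)
  moreover have "n t \<le> 1"
    using fn_one_nonpos[OF P] by (intro le_invariant[OF dn init'(6) _ t]) (auto simp: cx_def cn_def min_def max_def)
  moreover have "n t \<ge> 0"
    by (intro ge_invariant[OF dn init'(5) _ t]) (auto simp: cn_def fn_zero min_def max_def)
  moreover have "h t \<le> hmax"
    using fh_nonpos[OF P] hmin hmax
    by (intro le_invariant[OF dh init'(4) _ t]) (auto simp: cx_def ch_def cn_def min_def max_def)
  moreover have "h t \<ge> hmin"
    using fh_nonneg[OF P] hmin hmax
    by (intro ge_invariant[OF dh init'(3) _ t]) (auto simp: cx_def ch_def cn_def min_def max_def)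
  ultimately show ?thesis
    by (simp add: x_def h_def n_def cbox_Pair_eq mem_Times_iff)
qed

lemma tumor_solution_in_box:
  assumes P: "params_ok P" and init: "0 \<le> x0" "x0 \<le> 1" "0 < h0" "0 \<le> n0" "n0 \<le> 1"
  defines "lo \<equiv> (0, min h0 1, 0)" and "hi \<equiv> (1, max h0 (h_upper P), 1)"
  obtains \<phi> where "\<phi> 0 = (x0, h0, n0)"
    "\<And>t. t \<ge> 0 \<Longrightarrow> (\<phi> has_vector_derivative tumor_field P (\<phi> t)) (at t within {0..})"
    "\<And>t. t \<ge> 0 \<Longrightarrow> \<phi> t \<in> cbox lo hi"
proof -
  have lo_hi: "\<forall>i\<in>Basis. lo \<bullet> i \<le> hi \<bullet> i"
    by (auto simp: lo_def hi_def Basis_prod_def)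
  have "bounded_lipschitz_on (cbox lo hi) (tumor_field P)"
    using tumor_field_bounded_lipschitz[OF P, of "min h0 1" 0] init
    by (simp add: lo_def hi_def cbox_Pair_eq)
  then obtain L where bounded: "bounded (tumor_field P ` cbox lo hi)"
    and lip: "L-lipschitz_on (cbox lo hi) (tumor_field P)"
    by (auto simp: bounded_lipschitz_on_def)
  txt \<open>Clamping to the box makes the field globally Lipschitz and bounded without changing
    it on the box, where the solution will be shown to stay.\<close>
  have "1-lipschitz_on UNIV (clamp lo hi)"
    by (rule lipschitz_onI) (auto simp: dist_clamps_le_dist_args)
  then have "(L * 1)-lipschitz_on UNIV (\<lambda>p. tumor_field P (clamp lo hi p))"
    using lo_hi by (intro lipschitz_on_compose2 lipschitz_on_subset[OF lip]) auto
  moreover have "bounded (range (\<lambda>p. tumor_field P (clamp lo hi p)))"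
    by (rule bounded_subset[OF bounded]) (use lo_hi in auto)
  ultimately obtain \<phi> where \<phi>0: "\<phi> 0 = (x0, h0, n0)" and
    der: "\<And>t. t \<ge> 0 \<Longrightarrow> (\<phi> has_vector_derivative tumor_field P (clamp lo hi (\<phi> t))) (at t within {0..})"
    using lipschitz_ode_global_existence[where y\<^sub>0 = "(x0, h0, n0)"] by blast
  have "h_upper P \<ge> 1"
    using params_okD[OF P] by (simp add: h_upper_def)
  then have box: "\<phi> t \<in> cbox lo hi" if "t \<ge> 0" for t
    unfolding lo_def hi_def using init \<phi>0
    by (intro clamped_tumor_solution_in_box[OF P _ _ _ der[unfolded lo_def hi_def] _ that])
      (auto simp: cbox_Pair_eq)
  have "(\<phi> has_vector_derivative tumor_field P (\<phi> t)) (at t within {0..})" if "t \<ge> 0" for t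
    using der[OF that] box[OF that] by simp
  from \<phi>0 this box show ?thesis
    by (rule that)
qed

lemma tumor_solution_exists:
  assumes P: "params_ok P" and init: "0 \<le> x0" "x0 \<le> 1" "0 < h0" "0 \<le> n0" "n0 \<le> 1"
  obtains x h n where "is_solution P x h n" "x 0 = x0" "h 0 = h0" "n 0 = n0"
    "\<And>t. t \<ge> 0 \<Longrightarrow> 0 \<le> x t \<and> x t \<le> 1 \<and> min h0 1 \<le> h t \<and> 0 \<le> n t \<and> n t \<le> 1"
proof -
  obtain \<phi> where \<phi>0: "\<phi> 0 = (x0, h0, n0)"
    and der: "\<And>t. t \<ge> 0 \<Longrightarrow> (\<phi> has_vector_derivative tumor_field P (\<phi> t)) (at t within {0..})"
    and box: "\<And>t. t \<ge> 0 \<Longrightarrow> \<phi> t \<in> cbox (0, min h0 1, 0) (1, max h0 (h_upper P), 1)"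
    using tumor_solution_in_box[OF assms] by blast
  define x where "x t = fst (\<phi> t)" for t
  define h where "h t = fst (snd (\<phi> t))" for t
  define n where "n t = snd (snd (\<phi> t))" for t
  have \<phi>: "\<phi> = (\<lambda>t. (x t, h t, n t))"
    by (simp add: x_def h_def n_def)
  show ?thesis
  proof (rule that)
    show "is_solution P x h n"
      unfolding is_solution_iff_vector using der by (simp add: \<phi>)
    show "x 0 = x0" "h 0 = h0" "n 0 = n0"
      using \<phi>0 by (simp_all add: \<phi>)
    show "0 \<le> x t \<and> x t \<le> 1 \<and> min h0 1 \<le> h t \<and> 0 \<le> n t \<and> n t \<le> 1" if "t \<ge> 0" for t
      using box[OF that] by (simp add: \<phi> cbox_Pair_eq mem_Times_iff)
  qed
qed

lemma tumor_solution_unique: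
  assumes P: "params_ok P" and sol: "is_solution P x h n"
    and pos: "\<And>t. t \<ge> 0 \<Longrightarrow> h t > 0 \<and> n t \<ge> 0"
    and sol': "is_solution P x' h' n'" and init: "x' 0 = x 0" "h' 0 = h 0" "n' 0 = n 0"
    and t: "t \<ge> 0"
  shows "x' t = x t \<and> h' t = h t \<and> n' t = n t"
proof -
  have y: "((\<lambda>t. (x t, h t, n t)) has_vector_derivative tumor_field P (x t, h t, n t))
      (at t within {0..})" if "t \<ge> 0" for t
    using sol that by (simp add: is_solution_iff_vector)
  have z: "((\<lambda>t. (x' t, h' t, n' t)) has_vector_derivative tumor_field P (x' t, h' t, n' t))
      (at t within {0..})" if "t \<ge> 0" for t
    using sol' that by (simp add: is_solution_iff_vector)
  have lip: "\<exists>r>0. \<exists>L. L-lipschitz_on (cball (x t, h t, n t) r) (tumor_field P)" if "t \<ge> 0" for t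
    using tumor_field_locally_lipschitz[OF P] pos[OF that] by blast
  have "(x 0, h 0, n 0) = (x' 0, h' 0, n' 0)"
    using init by simp
  from ode_solutions_unique[OF y z this lip t] show ?thesis
    by simp
qed

theorem theorem1:
  fixes P :: params and x0 h0 n0 :: real
  assumes "params_ok P"
    and "0 \<le> x0" "x0 \<le> 1" "h0 > 0" "0 \<le> n0" "n0 \<le> 1"
  shows "\<exists>x h n. is_solution P x h n \<and> x 0 = x0 \<and> h 0 = h0 \<and> n 0 = n0 \<and>
           (\<forall>t\<ge>0. 0 \<le> x t \<and> x t \<le> 1 \<and> h t > 0 \<and> 0 \<le> n t \<and> n t \<le> 1) \<and>
           (\<forall>x' h' n'. is_solution P x' h' n' \<and> x' 0 = x0 \<and> h' 0 = h0 \<and> n' 0 = n0 \<and>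
                (\<forall>t\<ge>0. h' t > 0) \<longrightarrow>
              (\<forall>t\<ge>0. x' t = x t \<and> h' t = h t \<and> n' t = n t))"
proof -
  obtain x h n where sol: "is_solution P x h n" and init: "x 0 = x0" "h 0 = h0" "n 0 = n0"
    and bounds: "\<And>t. t \<ge> 0 \<Longrightarrow> 0 \<le> x t \<and> x t \<le> 1 \<and> min h0 1 \<le> h t \<and> 0 \<le> n t \<and> n t \<le> 1"
    using tumor_solution_exists[OF assms] by blast
  have "min h0 1 > 0"
    using assms(4) by simp
  then have pos: "h t > 0" if "t \<ge> 0" for t
    using bounds[OF that] by linarith
  then have range: "\<forall>t\<ge>0. 0 \<le> x t \<and> x t \<le> 1 \<and> h t > 0 \<and> 0 \<le> n t \<and> n t \<le> 1"
    using bounds by simp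
  have "\<forall>x' h' n'. is_solution P x' h' n' \<and> x' 0 = x0 \<and> h' 0 = h0 \<and> n' 0 = n0 \<and>
      (\<forall>t\<ge>0. h' t > 0) \<longrightarrow> (\<forall>t\<ge>0. x' t = x t \<and> h' t = h t \<and> n' t = n t)"
    using tumor_solution_unique[OF assms(1) sol] pos bounds init by simp blast
  with sol init range show ?thesis
    by blast
qed

end
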